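(* Let $A=(a_{ij})$ be a nonnegative weighted adjacency matrix on vertices $v_1,\dots,v_n$ with all out-degrees $o(v_i)=\sum_j a_{ij}>0$, let $P=D_o^{-1}A$ with $D_o=\operatorname{diag}(o(v_1),\dots,o(v_n))$, let $\nu(v_j)=\sum_{\ell=1}^n p_{\ell j}$, assume $\nu(v_j)>0$ for all $j$, set $D_\nu=\operatorname{diag}(\nu(v_1),\dots,\nu(v_n))$ and $Q=PD_\nu^{-1}P^\top$. Let $(x^{(k)},y^{(k)})$, $k=1,2,\dots$, be i.i.d. pairs where $x^{(k)}$ is uniformly distributed on $\{v_1,\dots,v_n\}$ and, given $x^{(k)}=v_i$, $y^{(k)}=v_j$ with probability $p_{ij}$. Let $\phi=(\phi_1,\dots,\phi_n)^\top$ with $\phi_i$ the indicator function of $v_i$, and for each $m$ let $\Phi_x=[\phi(x^{(1)}),\dots,\phi(x^{(m)})]$, $\Phi_y=[\phi(y^{(1)}),\dots,\phi(y^{(m)})]\in\mathbb{R}^{n\times m}$, $C_{xx}=\frac1m\Phi_x\Phi_x^\top$, $C_{yy}=\frac1m\Phi_y\Phi_y^\top$, $C_{xy}=C_{yx}^\top=\frac1m\Phi_x\Phi_y^\top$, and $\widehat K^{(m)}=C_{xx}^+C_{xy}$, $\widehat P^{(m)}=C_{xx}^+C_{yx}$, $\widehat F^{(m)}=C_{xx}^+C_{xy}C_{yy}^+C_{yx}$, where $^+$ denotes the Moore–Penrose pseudoinverse. Then, as $m\to\infty$ (almost surely), $\widehat K^{(m)}\to P$, $\widehat P^{(m)}\to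 P^\top$, and $\widehat F^{(m)}\to Q$.
   Context: $P$ is the transition matrix of the random walk on the graph; $\widehat K^{(m)}$, $\widehat P^{(m)}$, $\widehat F^{(m)}$ are the extended dynamic mode decomposition (EDMD) estimates of the Koopman, Perron–Frobenius and forward-backward operators from the data pairs, using the basis of vertex indicator functions (one-hot encodings). *)

theory Defs
  imports "HOL-Probability.Probability"
begin

definition pinv :: "real^'n^'n \<Rightarrow> real^'n^'n" where
  "pinv A = (THE B. A ** B ** A = A \<and> B ** A ** B = B \<and>
                    transpose (A ** B) = A ** B \<and> transpose (B ** A) = B ** A)"

definition outer :: "real^'n \<Rightarrow> real^'m \<Rightarrow> real^'m^'n" where
  "outer a b = (\<chi> i j. a$i * b$j)"

definition phi :: "'n::finite \<Rightarrow> real^'n" where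
  "phi v = (\<chi> i. if i = v then 1 else 0)"

text \<open>Empirical covariance (1/m) Phi_u Phi_w^T = (1/m) sum_k phi(u_k) phi(w_k)^T,
  samples indexed k = 0..m-1.\<close>
definition emp_cov :: "(nat \<Rightarrow> 'n::finite) \<Rightarrow> (nat \<Rightarrow> 'n) \<Rightarrow> nat \<Rightarrow> real^'n^'n" where
  "emp_cov u w m = (1 / real m) *\<^sub>R (\<Sum>k<m. outer (phi (u k)) (phi (w k)))"

definition K_hat :: "(nat \<Rightarrow> 'n::finite) \<Rightarrow> (nat \<Rightarrow> 'n) \<Rightarrow> nat \<Rightarrow> real^'n^'n" where
  "K_hat x y m = pinv (emp_cov x x m) ** emp_cov x y m"

definition P_hat :: "(nat \<Rightarrow> 'n::finite) \<Rightarrow> (nat \<Rightarrow> 'n) \<Rightarrow> nat \<Rightarrow> real^'n^'n" where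
  "P_hat x y m = pinv (emp_cov x x m) ** emp_cov y x m"

definition F_hat :: "(nat \<Rightarrow> 'n::finite) \<Rightarrow> (nat \<Rightarrow> 'n) \<Rightarrow> nat \<Rightarrow> real^'n^'n" where
  "F_hat x y m = pinv (emp_cov x x m) ** emp_cov x y m ** pinv (emp_cov y y m) ** emp_cov y x m"

end

theory Submission
  imports Defs
begin

(* With one-hot features the empirical covariance C_xy is the matrix of empirical frequencies of
   the observed pairs (v_i, v_j), while C_xx and C_yy are the diagonal matrices of its row and
   column sums. By the strong law of large numbers (Hoeffding's inequality plus Borel-Cantelli),
   C_xy tends almost surely to P/n, whose row sums 1/n and column sums nu_j/n are nonzero. So the
   pseudoinverses are eventually ordinary inverses of diagonal matrices and converge to diag(n)
   and diag(n/nu), and continuity of matrix multiplication gives the limits P, P^T and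
   P D_nu^-1 P^T. *)

definition diag_mat :: "('n::finite \<Rightarrow> real) \<Rightarrow> real^'n^'n" where
  "diag_mat d = (\<chi> i j. if i = j then d i else 0)"

lemma diag_mat_mult_nth [simp]: "(diag_mat d ** B) $ i $ j = d i * B $ i $ j"
  by (simp add: diag_mat_def matrix_matrix_mult_def if_distrib[of "\<lambda>x. x * _"] cong: if_cong)

lemma diag_mat_mult_diag_mat: "diag_mat a ** diag_mat b = diag_mat (\<lambda>i. a i * b i)"
  by (simp add: vec_eq_iff) (simp add: diag_mat_def)

lemma pinv_eqI:
  fixes A B :: "real^'n^'n"
  assumes AB: "A ** B = mat 1" and BA: "B ** A = mat 1"
  shows "pinv A = B"
  unfolding pinv_def
proof (rule the_equality)
  show "A ** B ** A = A \<and> B ** A ** B = B \<and> transpose (A ** B) = A ** B \<and> transpose (B ** A) = B ** A"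
    by (simp add: AB BA matrix_mul_lid matrix_mul_rid transpose_mat)
next
  fix C assume "A ** C ** A = A \<and> C ** A ** C = C \<and>
      transpose (A ** C) = A ** C \<and> transpose (C ** A) = C ** A"
  then have ACA: "A ** C ** A = A" by blast
  have "C = (B ** A) ** C ** (A ** B)"
    by (simp add: AB BA matrix_mul_lid matrix_mul_rid)
  also have "\<dots> = B ** (A ** C ** A) ** B"
    by (simp add: matrix_mul_assoc)
  also have "\<dots> = B"
    by (simp add: ACA BA matrix_mul_lid)
  finally show "C = B" .
qed

lemma pinv_diag_mat:
  assumes "\<And>i. d i \<noteq> 0"
  shows "pinv (diag_mat d) = diag_mat (\<lambda>i. 1 / d i)"
proof -
  have "diag_mat (\<lambda>i. 1) = mat 1"
    by (simp add: diag_mat_def mat_def)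
  with assms show ?thesis
    by (intro pinv_eqI) (simp_all add: diag_mat_mult_diag_mat)
qed

lemma tendsto_matrix_mult:
  fixes A :: "'b \<Rightarrow> real^'n::finite^'m::finite" and B :: "'b \<Rightarrow> real^'k::finite^'n"
  assumes "(A \<longlongrightarrow> a) F" and "(B \<longlongrightarrow> b) F"
  shows "((\<lambda>t. A t ** B t) \<longlongrightarrow> a ** b) F"
  unfolding matrix_matrix_mult_def
  by (intro vec_tendstoI) (simp add: tendsto_sum tendsto_mult tendsto_vec_nth assms)

lemma tendsto_transpose:
  fixes A :: "'b \<Rightarrow> real^'n::finite^'m::finite"
  assumes "(A \<longlongrightarrow> a) F"
  shows "((\<lambda>t. transpose (A t)) \<longlongrightarrow> transpose a) F"
  unfolding transpose_def by (intro vec_tendstoI) (simp add: tendsto_vec_nth assms)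

lemma tendsto_diag_mat:
  assumes "\<And>i. ((\<lambda>t. d t i) \<longlongrightarrow> c i) F"
  shows "((\<lambda>t. diag_mat (d t)) \<longlongrightarrow> diag_mat c) F"
  unfolding diag_mat_def by (intro vec_tendstoI) (simp add: assms)

lemma tendsto_pinv_diag_mat:
  assumes lim: "\<And>i. ((\<lambda>t. d t i) \<longlongrightarrow> c i) F" and nz: "\<And>i. c i \<noteq> 0"
  shows "((\<lambda>t. pinv (diag_mat (d t))) \<longlongrightarrow> diag_mat (\<lambda>i. 1 / c i)) F"
proof (rule Lim_transform_eventually)
  show "((\<lambda>t. diag_mat (\<lambda>i. 1 / d t i)) \<longlongrightarrow> diag_mat (\<lambda>i. 1 / c i)) F"
    using lim nz by (intro tendsto_diag_mat tendsto_divide tendsto_const)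
  have "eventually (\<lambda>t. \<forall>i. d t i \<noteq> 0) F"
    using lim nz by (intro eventually_all_finite tendsto_imp_eventually_ne)
  then show "eventually (\<lambda>t. diag_mat (\<lambda>i. 1 / d t i) = pinv (diag_mat (d t))) F"
    by eventually_elim (simp add: pinv_diag_mat)
qed

lemma outer_phi_nth: "outer (phi a) (phi b) $ i $ j = of_bool (a = i \<and> b = j)"
  by (auto simp: outer_def phi_def)

lemma emp_cov_nth: "emp_cov u w m $ i $ j = (\<Sum>k<m. of_bool (u k = i \<and> w k = j)) / real m"
  by (simp add: emp_cov_def sum_component outer_phi_nth del: sum_of_bool_eq)

lemma emp_cov_swap: "emp_cov w u m = transpose (emp_cov u w m)"
  by (simp add: vec_eq_iff transpose_def emp_cov_nth conj_commute)

lemma emp_cov_self_row_sums: "emp_cov u u m = diag_mat (\<lambda>i. \<Sum>j\<in>UNIV. emp_cov u w m $ i $ j)"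
proof -
  have row_sum: "(\<Sum>j\<in>UNIV. emp_cov u w m $ i $ j) = (\<Sum>k<m. of_bool (u k = i)) / real m" for i
  proof -
    have one_hot: "(\<Sum>j\<in>UNIV. of_bool (u k = i \<and> w k = j)) = (of_bool (u k = i) :: real)" for k
      by (cases "u k = i") simp_all
    have "(\<Sum>j\<in>UNIV. emp_cov u w m $ i $ j) = (\<Sum>j\<in>UNIV. \<Sum>k<m. of_bool (u k = i \<and> w k = j)) / real m"
      by (simp add: emp_cov_nth sum_divide_distrib del: sum_of_bool_eq)
    also have "\<dots> = (\<Sum>k<m. \<Sum>j\<in>UNIV. of_bool (u k = i \<and> w k = j)) / real m"
      by (subst sum.swap) (rule refl)
    also have "\<dots> = (\<Sum>k<m. of_bool (u k = i)) / real m"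
      by (simp only: one_hot)
    finally show ?thesis .
  qed
  have "emp_cov u u m $ i $ i' = (if i = i' then (\<Sum>k<m. of_bool (u k = i)) / real m else 0)" for i i'
    by (auto simp: emp_cov_nth)
  then show ?thesis
    by (simp add: vec_eq_iff diag_mat_def row_sum)
qed

lemma emp_cov_self_col_sums: "emp_cov w w m = diag_mat (\<lambda>j. \<Sum>i\<in>UNIV. emp_cov u w m $ i $ j)"
  using emp_cov_self_row_sums[of w m u] by (simp add: emp_cov_swap[of w u] transpose_def)

lemma EDMD_tendsto:
  fixes x y :: "nat \<Rightarrow> 'n::finite" and J :: "real^'n^'n"
  assumes lim: "emp_cov x y \<longlonglongrightarrow> J"
    and row_sums: "\<And>i. (\<Sum>j\<in>UNIV. J $ i $ j) = r i" and r: "\<And>i. r i \<noteq> 0"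
    and col_sums: "\<And>j. (\<Sum>i\<in>UNIV. J $ i $ j) = c j" and c: "\<And>j. c j \<noteq> 0"
  shows "K_hat x y \<longlonglongrightarrow> diag_mat (\<lambda>i. 1 / r i) ** J"
    and "P_hat x y \<longlonglongrightarrow> diag_mat (\<lambda>i. 1 / r i) ** transpose J"
    and "F_hat x y \<longlonglongrightarrow> diag_mat (\<lambda>i. 1 / r i) ** J ** diag_mat (\<lambda>j. 1 / c j) ** transpose J"
proof -
  have entries: "(\<lambda>m. emp_cov x y m $ i $ j) \<longlonglongrightarrow> J $ i $ j" for i j
    using lim by (intro tendsto_vec_nth)
  have Cxx: "(\<lambda>m. pinv (emp_cov x x m)) \<longlonglongrightarrow> diag_mat (\<lambda>i. 1 / r i)"
    unfolding emp_cov_self_row_sums[of x _ y]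
    by (intro tendsto_pinv_diag_mat r) (auto simp flip: row_sums intro: tendsto_sum entries)
  have Cyy: "(\<lambda>m. pinv (emp_cov y y m)) \<longlonglongrightarrow> diag_mat (\<lambda>j. 1 / c j)"
    unfolding emp_cov_self_col_sums[of y _ x]
    by (intro tendsto_pinv_diag_mat c) (auto simp flip: col_sums intro: tendsto_sum entries)
  have "emp_cov y x = (\<lambda>m. transpose (emp_cov x y m))"
    by (simp add: fun_eq_iff emp_cov_swap[of y x])
  then have Cyx: "emp_cov y x \<longlonglongrightarrow> transpose J"
    using lim by (simp add: tendsto_transpose)
  show "K_hat x y \<longlonglongrightarrow> diag_mat (\<lambda>i. 1 / r i) ** J"
    unfolding K_hat_def[abs_def] by (intro tendsto_matrix_mult Cxx lim)
  show "P_hat x y \<longlonglongrightarrow> diag_mat (\<lambda>i. 1 / r i) ** transpose J"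
    unfolding P_hat_def[abs_def] by (intro tendsto_matrix_mult Cxx Cyx)
  show "F_hat x y \<longlonglongrightarrow> diag_mat (\<lambda>i. 1 / r i) ** J ** diag_mat (\<lambda>j. 1 / c j) ** transpose J"
    unfolding F_hat_def[abs_def] by (intro tendsto_matrix_mult Cxx Cyy lim Cyx)
qed

lemma AE_tendstoI:
  fixes f :: "nat \<Rightarrow> 'a \<Rightarrow> 'b::metric_space"
  assumes "\<And>e. e > 0 \<Longrightarrow> AE \<omega> in M. eventually (\<lambda>m. dist (f m \<omega>) l < e) sequentially"
  shows "AE \<omega> in M. (\<lambda>m. f m \<omega>) \<longlonglongrightarrow> l"
proof -
  have "AE \<omega> in M. \<forall>r::nat. eventually (\<lambda>m. dist (f m \<omega>) l < 1 / Suc r) sequentially"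
    by (subst AE_all_countable) (simp add: assms)
  then show ?thesis
  proof eventually_elim
    case (elim \<omega>)
    show ?case
    proof (rule tendstoI)
      fix e :: real
      assume "e > 0"
      then obtain r :: nat where r: "1 / Suc r < e"
        by (rule nat_approx_posE)
      from elim have "eventually (\<lambda>m. dist (f m \<omega>) l < 1 / Suc r) sequentially" ..
      then show "eventually (\<lambda>m. dist (f m \<omega>) l < e) sequentially"
        by eventually_elim (use r in linarith)
    qed
  qed
qed

context prob_space
begin

lemma prob_sum_deviation_le:
  fixes Z :: "nat \<Rightarrow> 'a \<Rightarrow> real"
  assumes indep: "indep_vars (\<lambda>_. borel) Z UNIV"
    and bounded: "\<And>k. AE \<omega> in M. Z k \<omega> \<in> {0..1}"
    and expectation: "\<And>k. expectation (Z k) = p"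
    and "e \<ge> 0"
  shows "prob {\<omega> \<in> space M. real m * e \<le> \<bar>(\<Sum>k<m. Z k \<omega>) - real m * p\<bar>}
           \<le> 2 * exp (-2 * e\<^sup>2) ^ m"
proof (cases "m = 0")
  case True
  then show ?thesis
    by (simp add: prob_space)
next
  case False
  interpret Hoeffding_ineq M "{..<m}" Z "\<lambda>_. 0" "\<lambda>_. 1" "real m * p"
    using bounded by unfold_locales (simp_all add: expectation indep_vars_subset[OF indep])
  have "prob {\<omega> \<in> space M. real m * e \<le> \<bar>(\<Sum>k<m. Z k \<omega>) - real m * p\<bar>}
          \<le> 2 * exp (-2 * (real m * e)\<^sup>2 / (\<Sum>k<m. (1 - 0)\<^sup>2))"
    using Hoeffding_ineq_abs_ge[of "real m * e"] False \<open>e \<ge> 0\<close> by simp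
  also have "-2 * (real m * e)\<^sup>2 / (\<Sum>k<m. (1 - 0)\<^sup>2) = real m * (-2 * e\<^sup>2)"
    using False by (simp add: power2_eq_square)
  finally show ?thesis
    by (simp only: exp_of_nat_mult)
qed

lemma AE_eventually_mean_close:
  fixes Z :: "nat \<Rightarrow> 'a \<Rightarrow> real"
  assumes indep: "indep_vars (\<lambda>_. borel) Z UNIV"
    and bounded: "\<And>k. AE \<omega> in M. Z k \<omega> \<in> {0..1}"
    and expectation: "\<And>k. expectation (Z k) = p"
    and "e > 0"
  shows "AE \<omega> in M. eventually (\<lambda>m. dist ((\<Sum>k<m. Z k \<omega>) / real m) p < e) sequentially"
proof -
  define B where "B m = {\<omega> \<in> space M. real m * e \<le> \<bar>(\<Sum>k<m. Z k \<omega>) - real m * p\<bar>}" for m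
  have [measurable]: "Z k \<in> borel_measurable M" for k
    using indep by (simp add: indep_vars_def)
  have "summable (\<lambda>m. prob (B m))"
  proof (rule summable_comparison_test')
    show "summable (\<lambda>m. 2 * exp (-2 * e\<^sup>2) ^ m)"
      using \<open>e > 0\<close> by (intro summable_mult summable_geometric) simp
    show "norm (prob (B m)) \<le> 2 * exp (-2 * e\<^sup>2) ^ m" for m
      unfolding B_def using prob_sum_deviation_le[OF assms(1-3)] \<open>e > 0\<close> by simp
  qed
  then have "AE \<omega> in M. eventually (\<lambda>m. \<omega> \<in> space M - B m) sequentially"
    by (intro borel_cantelli_AE1) (simp_all add: B_def emeasure_eq_measure)
  with AE_space show ?thesis
  proof eventually_elim
    case (elim \<omega>)
    from elim(2) eventually_gt_at_top[of 0] show ?case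
    proof eventually_elim
      case (elim m)
      then have "\<bar>(\<Sum>k<m. Z k \<omega>) - real m * p\<bar> < real m * e"
        using \<open>\<omega> \<in> space M\<close> by (auto simp: B_def)
      with \<open>m > 0\<close> show ?case
        by (simp add: dist_real_def divide_diff_eq_iff pos_divide_less_eq mult.commute)
    qed
  qed
qed

theorem AE_mean_tendsto:
  fixes Z :: "nat \<Rightarrow> 'a \<Rightarrow> real"
  assumes "indep_vars (\<lambda>_. borel) Z UNIV"
    and "\<And>k. AE \<omega> in M. Z k \<omega> \<in> {0..1}"
    and "\<And>k. expectation (Z k) = p"
  shows "AE \<omega> in M. (\<lambda>m. (\<Sum>k<m. Z k \<omega>) / real m) \<longlonglongrightarrow> p"
  using AE_eventually_mean_close[OF assms]
  by (rule AE_tendstoI[where f = "\<lambda>m \<omega>. (\<Sum>k<m. Z k \<omega>) / real m"])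

lemma AE_emp_cov_tendsto:
  fixes X Y :: "nat \<Rightarrow> 'a \<Rightarrow> 'n::finite" and J :: "real^'n^'n"
  assumes indep: "indep_vars (\<lambda>_. count_space UNIV) (\<lambda>k \<omega>. (X k \<omega>, Y k \<omega>)) UNIV"
    and distr: "\<And>k i j. prob {\<omega> \<in> space M. X k \<omega> = i \<and> Y k \<omega> = j} = J $ i $ j"
  shows "AE \<omega> in M. emp_cov (\<lambda>k. X k \<omega>) (\<lambda>k. Y k \<omega>) \<longlonglongrightarrow> J"
proof -
  have "AE \<omega> in M. (\<lambda>m. emp_cov (\<lambda>k. X k \<omega>) (\<lambda>k. Y k \<omega>) m $ i $ j) \<longlonglongrightarrow> J $ i $ j" for i j
  proof -
    define Z where "Z k \<omega> = (of_bool ((X k \<omega>, Y k \<omega>) = (i, j)) :: real)" for k \<omega>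
    have "indep_vars (\<lambda>_. borel) Z UNIV"
      unfolding Z_def by (rule indep_vars_compose2[OF indep]) simp
    moreover have "expectation (Z k) = J $ i $ j" for k
    proof -
      have "Z k = indicator {\<omega>. X k \<omega> = i \<and> Y k \<omega> = j}"
        by (simp add: Z_def fun_eq_iff indicator_def)
      then show ?thesis
        by (simp add: distr Int_def conj_commute)
    qed
    moreover have "AE \<omega> in M. Z k \<omega> \<in> {0..1}" for k
      by (simp add: Z_def)
    ultimately have "AE \<omega> in M. (\<lambda>m. (\<Sum>k<m. Z k \<omega>) / real m) \<longlonglongrightarrow> J $ i $ j"
      by (intro AE_mean_tendsto)
    then show ?thesis
      by (simp add: emp_cov_nth Z_def del: sum_of_bool_eq)
  qed
  then have "AE \<omega> in M. \<forall>i j. (\<lambda>m. emp_cov (\<lambda>k. X k \<omega>) (\<lambda>k. Y k \<omega>) m $ i $ j) \<longlonglongrightarrow> J $ i $ j"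
    by (simp add: AE_all_countable)
  then show ?thesis
    by eventually_elim (intro vec_tendstoI, blast)
qed

end

theorem mainTheorem2:
  fixes A :: "real^'n^'n"
    and M :: "'a measure"
    and X Y :: "nat \<Rightarrow> 'a \<Rightarrow> 'n"
    and P Q :: "real^'n^'n"
    and outdeg nu :: "'n \<Rightarrow> real"
  assumes nonneg: "\<And>i j. A$i$j \<ge> 0"
    and outdeg_def: "\<And>i. outdeg i = (\<Sum>j\<in>UNIV. A$i$j)"
    and outdeg_pos: "\<And>i. outdeg i > 0"
    and P_def: "P = (\<chi> i j. A$i$j / outdeg i)"
    and nu_def: "\<And>j. nu j = (\<Sum>l\<in>UNIV. P$l$j)"
    and nu_pos: "\<And>j. nu j > 0"
    and Q_def: "Q = P ** (\<chi> i j. if i = j then 1 / nu i else 0) ** transpose P"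
    and M: "prob_space M"
    and indep: "prob_space.indep_vars M (\<lambda>_. count_space UNIV) (\<lambda>k \<omega>. (X k \<omega>, Y k \<omega>)) UNIV"
    and distr: "\<And>k i j. measure M {\<omega> \<in> space M. X k \<omega> = i \<and> Y k \<omega> = j}
                         = P$i$j / real CARD('n)"
  shows "AE \<omega> in M.
           (\<lambda>m. K_hat (\<lambda>k. X k \<omega>) (\<lambda>k. Y k \<omega>) m) \<longlonglongrightarrow> P \<and>
           (\<lambda>m. P_hat (\<lambda>k. X k \<omega>) (\<lambda>k. Y k \<omega>) m) \<longlonglongrightarrow> transpose P \<and>
           (\<lambda>m. F_hat (\<lambda>k. X k \<omega>) (\<lambda>k. Y k \<omega>) m) \<longlonglongrightarrow> Q"
proof -
  let ?n = "real CARD('n)"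
  define J where "J = (\<chi> i j. P $ i $ j / ?n)"
  have stochastic: "(\<Sum>j\<in>UNIV. P $ i $ j) = 1" for i
    using outdeg_pos[of i] by (simp add: P_def outdeg_def flip: sum_divide_distrib)
  have J_row_sums: "(\<Sum>j\<in>UNIV. J $ i $ j) = 1 / ?n" for i
    by (simp add: J_def stochastic flip: sum_divide_distrib)
  have J_col_sums: "(\<Sum>i\<in>UNIV. J $ i $ j) = nu j / ?n" for j
    by (simp add: J_def nu_def flip: sum_divide_distrib)
  have K_lim: "diag_mat (\<lambda>i. 1 / (1 / ?n)) ** J = P"
    by (simp add: vec_eq_iff J_def)
  have P_lim: "diag_mat (\<lambda>i. 1 / (1 / ?n)) ** transpose J = transpose P"
    by (simp add: vec_eq_iff J_def transpose_def)
  have "diag_mat (\<lambda>j. 1 / (nu j / ?n)) ** transpose J = diag_mat (\<lambda>j. 1 / nu j) ** transpose P"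
    by (simp add: vec_eq_iff J_def transpose_def)
  then have F_lim: "P ** diag_mat (\<lambda>j. 1 / (nu j / ?n)) ** transpose J = Q"
    by (simp add: Q_def diag_mat_def flip: matrix_mul_assoc)
  have r_nz: "1 / ?n \<noteq> 0" and c_nz: "nu j / ?n \<noteq> 0" for j
    using nu_pos[of j] by simp_all
  have "AE \<omega> in M. emp_cov (\<lambda>k. X k \<omega>) (\<lambda>k. Y k \<omega>) \<longlonglongrightarrow> J"
    by (rule prob_space.AE_emp_cov_tendsto[OF M indep]) (simp add: distr J_def)
  then show ?thesis
  proof eventually_elim
    case (elim \<omega>)
    from EDMD_tendsto[OF elim J_row_sums r_nz J_col_sums c_nz, unfolded K_lim P_lim F_lim]
    show ?case by blast
  qed
qed

end
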